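(* Let $\lambda>0$ and $n\ge0$ an integer. Then for all $x\in[-1,1]$, $$\mathcal D^\lambda_+C^\lambda_n(x)=\frac{\sqrt\pi\,\Gamma(\lambda+\frac12)}{\Gamma(\lambda)}\,\frac{2(n+2\lambda)}{n+\lambda}\,C^{\lambda+1/2}_{n-1}(x),\qquad \mathcal D^\lambda_-C^\lambda_n(x)=\frac{\sqrt\pi\,\Gamma(\lambda+\frac12)}{\Gamma(\lambda)}\,\frac{2n}{n+\lambda}\,C^{\lambda+1/2}_n(x),$$ with the convention $C^{\lambda+1/2}_{-1}=0$.
   Context: $C^\mu_n$ are Gegenbauer polynomials with generating function $(1-2xr+r^2)^{-\mu}$. For $f$ absolutely continuous on $[-1,1]$ and $\lambda\ge0$: $D^\lambda_+f(x)=(1+x)\frac{d}{dx}\Big\{(1+x)^{-\lambda}\int_{-1}^x(x-\tau)^{-1/2}(1+\tau)^{\lambda-1/2}f(\tau)\,d\tau\Big\}$, $D^\lambda_-f(x)=(1-x)\frac{d}{dx}\Big\{(1-x)^{-\lambda}\int_x^1(\tau-x)^{-1/2}(1-\tau)^{\lambda-1/2}f(\tau)\,d\tau\Big\}$, $\mathcal D^\lambda_+=D^\lambda_++D^\lambda_-$, $\mathcal D^\lambda_-=D^\lambda_+-D^\lambda_-$. *)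

theory Defs
  imports "HOL-Analysis.Analysis"
begin

definition gegenbauer :: "real \<Rightarrow> nat \<Rightarrow> real \<Rightarrow> real" where
  "gegenbauer \<mu> n x =
     ((deriv ^^ n) (\<lambda>r. (1 - 2 * x * r + r ^ 2) powr (- \<mu>)) 0) / fact n"

definition Dplus :: "real \<Rightarrow> (real \<Rightarrow> real) \<Rightarrow> real \<Rightarrow> real" where
  "Dplus lam f x = (1 + x) *
     vector_derivative
       (\<lambda>y. (1 + y) powr (- lam) *
            integral {-1..y} (\<lambda>\<tau>. (y - \<tau>) powr (-1/2) * (1 + \<tau>) powr (lam - 1/2) * f \<tau>))
       (at x within {-1..1})"

definition Dminus :: "real \<Rightarrow> (real \<Rightarrow> real) \<Rightarrow> real \<Rightarrow> real" where
  "Dminus lam f x = (1 - x) *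
     vector_derivative
       (\<lambda>y. (1 - y) powr (- lam) *
            integral {y..1} (\<lambda>\<tau>. (\<tau> - y) powr (-1/2) * (1 - \<tau>) powr (lam - 1/2) * f \<tau>))
       (at x within {-1..1})"

definition calDplus :: "real \<Rightarrow> (real \<Rightarrow> real) \<Rightarrow> real \<Rightarrow> real" where
  "calDplus lam f x = Dplus lam f x + Dminus lam f x"

definition calDminus :: "real \<Rightarrow> (real \<Rightarrow> real) \<Rightarrow> real \<Rightarrow> real" where
  "calDminus lam f x = Dplus lam f x - Dminus lam f x"

end

theory Submission
  imports Defs
begin

text \<open>
  In powers of y = (1 - x)/2, C^mu_n is the terminating hypergeometric series with coefficients
  (-1)^k (2 mu)_(n+k) / ((n-k)! k! (mu + 1/2)_k): these polynomials satisfy the three-term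
  recurrence of the Gegenbauer polynomials, and every sequence satisfying it has
  (1 - 2 x r + r^2)^(-mu) as generating function, since its power series solves the first-order
  ODE of that function. An affine substitution in the Beta integral shows that D^lambda_- is
  diagonal on the powers of 1 - x, D^lambda_- (1 - x)^k = -k B(1/2, lambda + k + 1/2) (1 - x)^k.
  Writing this Beta value with Pochhammer symbols, the coefficients of D^lambda_- C^lambda_n split
  into those of C^(lambda+1/2)_(n-1) and C^(lambda+1/2)_n. The parity
  C^lambda_n(-x) = (-1)^n C^lambda_n(x) turns D^lambda_+ into a reflected D^lambda_-, and adding and
  subtracting the two formulas gives the theorem.
\<close>

section \<open>Power series\<close>

lemma fps_of_poly_linear_mult_nth:
  "fps_nth (fps_of_poly [:a, b:] * f) n = a * fps_nth f n + (if n = 0 then 0 else b * fps_nth f (n - 1))"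
  for f :: "'a :: comm_ring_1 fps"
proof -
  have "fps_of_poly [:a, b:] * f = fps_const a * f + fps_X * (fps_const b * f)"
    by (simp add: fps_of_poly_pCons fps_of_poly_const algebra_simps)
  thus ?thesis by simp
qed

lemma fps_of_poly_quadratic_mult_nth:
  "fps_nth (fps_of_poly [:a, b, d:] * f) n = a * fps_nth f n
     + (if n = 0 then 0 else b * fps_nth f (n - 1)) + (if n < 2 then 0 else d * fps_nth f (n - 2))"
  for f :: "'a :: comm_ring_1 fps"
proof -
  have "fps_of_poly [:a, b, d:] * f = fps_const a * f + fps_X * (fps_of_poly [:b, d:] * f)"
    by (simp add: fps_of_poly_pCons algebra_simps)
  thus ?thesis by (simp add: fps_of_poly_linear_mult_nth numeral_2_eq_2)
qed

lemma fps_conv_radius_of_poly_mult_ge: "fps_conv_radius (fps_of_poly p * f) \<ge> fps_conv_radius f"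
  for f :: "'a :: {banach, real_normed_div_algebra, comm_ring_1} fps"
  using fps_conv_radius_mult[of "fps_of_poly p" f] by simp

lemma eval_fps_of_poly_mult:
  fixes f :: "'a :: {banach, real_normed_field} fps"
  assumes "norm z < fps_conv_radius f"
  shows "eval_fps (fps_of_poly p * f) z = poly p z * eval_fps f z"
  using assms by (simp add: eval_fps_mult)

lemma fps_nth_conv_higher_deriv_real:
  fixes f :: "real fps"
  assumes "fps_conv_radius f > 0"
  shows "fps_nth f n = (deriv ^^ n) (eval_fps f) 0 / fact n"
  using assms
proof (induction n arbitrary: f)
  case (Suc n f)
  have "eventually (\<lambda>z::real. z \<in> eball 0 (fps_conv_radius f)) (nhds 0)"
    using Suc.prems by (intro eventually_nhds_in_open) (auto simp: zero_ereal_def)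
  hence "eventually (\<lambda>z. deriv (eval_fps f) z = eval_fps (fps_deriv f) z) (nhds 0)"
    by eventually_elim (simp add: eval_fps_deriv)
  hence "(deriv ^^ Suc n) (eval_fps f) 0 = (deriv ^^ n) (eval_fps (fps_deriv f)) 0"
    unfolding funpow_Suc_right o_def by (intro higher_deriv_cong_ev refl)
  also have "\<dots> / fact n = fps_nth (fps_deriv f) n"
    using Suc.prems fps_conv_radius_deriv[of f] by (intro Suc.IH [symmetric]) auto
  finally show ?case
    by (simp add: fps_deriv_def field_split_simps del: of_nat_Suc)
qed (simp add: eval_fps_def)

section \<open>The three-term recurrence determines the Gegenbauer polynomials\<close>

locale gegenbauer_sequence =
  fixes \<mu> x :: real and c :: "nat \<Rightarrow> real"
  assumes c_0: "c 0 = 1"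
      and c_1: "c 1 = 2 * \<mu> * x"
      and c_rec: "\<And>n. (real n + 2) * c (n + 2) = 2 * x * (real n + 1 + \<mu>) * c (n + 1) - (real n + 2 * \<mu>) * c n"
begin

definition growth :: real where "growth = 2 * (\<bar>x\<bar> + 1) * (1 + \<bar>\<mu>\<bar>)"

lemma growth_ge_1: "growth \<ge> 1"
proof -
  have "1 * 1 \<le> 2 * (\<bar>x\<bar> + 1) * (1 + \<bar>\<mu>\<bar>)"
    by (intro mult_mono) auto
  thus ?thesis by (simp add: growth_def)
qed

lemma abs_le_growth_power: "\<bar>c n\<bar> \<le> growth ^ n"
proof -
  let ?M = growth
  have "\<bar>c n\<bar> \<le> ?M ^ n \<and> \<bar>c (n + 1)\<bar> \<le> ?M ^ (n + 1)"
  proof (induction n)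
    case 0
    have "\<bar>\<mu>\<bar> * \<bar>x\<bar> \<le> (1 + \<bar>\<mu>\<bar>) * (\<bar>x\<bar> + 1)"
      by (intro mult_mono) auto
    hence "\<bar>2 * \<mu> * x\<bar> \<le> ?M"
      by (simp add: growth_def abs_mult algebra_simps)
    thus ?case using c_0 c_1 by simp
  next
    case (Suc n)
    have M1: "?M \<ge> 1" by (rule growth_ge_1)
    have "(1 + \<bar>\<mu>\<bar>) * (real n + 2) = real n + 2 + 2 * \<bar>\<mu>\<bar> + \<bar>\<mu>\<bar> * real n"
      and "0 \<le> \<bar>\<mu>\<bar> * real n"
      by (simp_all add: algebra_simps)
    hence b: "\<bar>real n + 2 * \<mu>\<bar> \<le> (1 + \<bar>\<mu>\<bar>) * (real n + 2)"
      and "\<bar>real n + 1 + \<mu>\<bar> \<le> (1 + \<bar>\<mu>\<bar>) * (real n + 2)"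
      by linarith+
    hence a: "\<bar>2 * x * (real n + 1 + \<mu>)\<bar> \<le> 2 * \<bar>x\<bar> * (1 + \<bar>\<mu>\<bar>) * (real n + 2)"
      unfolding abs_mult by (simp add: mult.assoc mult_left_mono)
    have "(real n + 2) * \<bar>c (n + 2)\<bar>
        \<le> \<bar>2 * x * (real n + 1 + \<mu>)\<bar> * \<bar>c (n + 1)\<bar> + \<bar>real n + 2 * \<mu>\<bar> * \<bar>c n\<bar>"
      using c_rec[of n] by (simp add: abs_mult[symmetric])
    also have "\<dots> \<le> 2 * \<bar>x\<bar> * (1 + \<bar>\<mu>\<bar>) * (real n + 2) * ?M ^ (n + 1) + (1 + \<bar>\<mu>\<bar>) * (real n + 2) * ?M ^ n"
      using Suc.IH by (intro add_mono mult_mono a b) auto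
    also have "\<dots> = (real n + 2) * ?M ^ n * (1 + \<bar>\<mu>\<bar>) * (2 * \<bar>x\<bar> * ?M + 1)"
      by (simp add: algebra_simps)
    also have "\<dots> \<le> (real n + 2) * ?M ^ n * ?M ^ 2"
    proof -
      have "(1 + \<bar>\<mu>\<bar>) * (2 * \<bar>x\<bar> * ?M + 1) \<le> (1 + \<bar>\<mu>\<bar>) * (2 * (\<bar>x\<bar> + 1) * ?M)"
        using M1 by (intro mult_left_mono) (auto simp: algebra_simps)
      also have "\<dots> = ?M ^ 2" by (simp add: growth_def power2_eq_square)
      finally show ?thesis
        using M1 by (simp only: mult.assoc[of "(real n + 2) * ?M ^ n"]) (intro mult_left_mono, auto)
    qed
    finally have "\<bar>c (n + 2)\<bar> \<le> ?M ^ (n + 2)"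
      by (simp add: power_add power2_eq_square ac_simps)
    thus ?case using Suc.IH by simp
  qed
  thus ?thesis ..
qed

lemma fps_conv_radius_ge: "fps_conv_radius (Abs_fps c) \<ge> ereal (1 / growth)"
  unfolding fps_conv_radius_def fps_nth_Abs_fps
proof (rule conv_radius_geI_ex')
  fix r :: real
  assume r: "0 < r" "ereal r < ereal (1 / growth)"
  have "growth * r < 1"
    using growth_ge_1 r by (simp add: field_simps)
  hence geometric: "summable (\<lambda>n. (growth * r) ^ n)"
    using r growth_ge_1 by (intro summable_geometric) simp
  have "norm (c n * r ^ n) \<le> (growth * r) ^ n" for n
    using abs_le_growth_power[of n] r
    by (simp add: abs_mult power_mult_distrib mult_right_mono)
  hence "summable (\<lambda>n. c n * r ^ n)"
    by (rule summable_comparison_test'[OF geometric])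
  thus "summable (\<lambda>n. c n * of_real r ^ n)"
    by simp
qed

lemma fps_ode:
  "fps_of_poly [:1, -2 * x, 1:] * fps_deriv (Abs_fps c)
     + fps_of_poly [:-2 * x * \<mu>, 2 * \<mu>:] * Abs_fps c = 0"
proof (rule fps_ext)
  fix n :: nat
  consider "n = 0" | "n = 1" | m where "n = m + 2"
    by (metis One_nat_def add_2_eq_Suc' not0_implies_Suc)
  thus "fps_nth (fps_of_poly [:1, -2 * x, 1:] * fps_deriv (Abs_fps c)
          + fps_of_poly [:-2 * x * \<mu>, 2 * \<mu>:] * Abs_fps c) n = fps_nth 0 n"
  proof cases
    case 1
    thus ?thesis
      using c_1 by (simp add: fps_of_poly_quadratic_mult_nth fps_of_poly_linear_mult_nth c_0)
  next
    case 2
    thus ?thesis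
      using c_rec[of 0] c_0
      by (simp add: fps_of_poly_quadratic_mult_nth fps_of_poly_linear_mult_nth) (simp add: algebra_simps)
  next
    case (3 m)
    thus ?thesis
      using c_rec[of "m + 1"]
      by (simp add: fps_of_poly_quadratic_mult_nth fps_of_poly_linear_mult_nth) (simp add: algebra_simps)
  qed
qed

lemma generating_polynomial_pos:
  assumes "\<bar>t\<bar> < 1 / growth"
  shows "1 - 2 * x * t + t ^ 2 > 0"
proof -
  have "\<bar>x\<bar> * \<bar>t\<bar> \<le> \<bar>x\<bar> * (1 / growth)"
    using assms by (intro mult_left_mono) auto
  also have "\<dots> \<le> \<bar>x\<bar> / (2 * (\<bar>x\<bar> + 1))"
  proof -
    have "2 * (\<bar>x\<bar> + 1) * 1 \<le> growth"
      unfolding growth_def by (intro mult_left_mono) auto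
    thus ?thesis by (simp add: divide_left_mono)
  qed
  also have "\<dots> < 1 / 2"
    by (simp add: field_simps)
  finally have "2 * x * t < 1"
    using abs_ge_self[of "2 * x * t"] by (simp add: abs_mult)
  thus ?thesis
    by (smt (verit) zero_le_power2)
qed

lemma norm_less_fps_conv_radius:
  assumes "\<bar>t\<bar> < 1 / growth"
  shows "norm t < fps_conv_radius (Abs_fps c)" "norm t < fps_conv_radius (fps_deriv (Abs_fps c))"
proof -
  show radius: "norm t < fps_conv_radius (Abs_fps c)"
    using assms less_le_trans[OF _ fps_conv_radius_ge] by simp
  thus "norm t < fps_conv_radius (fps_deriv (Abs_fps c))"
    using fps_conv_radius_deriv[of "Abs_fps c"] by (auto intro: less_le_trans)
qed

lemma eval_fps_ode:
  assumes "\<bar>t\<bar> < 1 / growth"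
  shows "(1 - 2 * x * t + t ^ 2) * eval_fps (fps_deriv (Abs_fps c)) t
           + \<mu> * (2 * t - 2 * x) * eval_fps (Abs_fps c) t = 0"
proof -
  have "norm t < fps_conv_radius (fps_of_poly p * G)" if "norm t < fps_conv_radius G" for p and G :: "real fps"
    using that fps_conv_radius_of_poly_mult_ge[where p = p and f = G] by (rule less_le_trans)
  thus ?thesis
    using arg_cong[OF fps_ode, of "\<lambda>F. eval_fps F t"] norm_less_fps_conv_radius[OF assms]
    by (simp add: eval_fps_add eval_fps_of_poly_mult) (simp add: algebra_simps power2_eq_square)
qed

lemma eval_fps_eq_generating_function:
  assumes r: "\<bar>r\<bar> < 1 / growth"
  shows "eval_fps (Abs_fps c) r = (1 - 2 * x * r + r ^ 2) powr (- \<mu>)"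
proof -
  define F where "F = Abs_fps c"
  define q where "q t = 1 - 2 * x * t + t ^ 2" for t :: real
  define S where "S = ball (0 :: real) (1 / growth)"
  define h where "h = (\<lambda>t. eval_fps F t * q t powr \<mu>)"
  have "(h has_field_derivative 0) (at t within S)" if t: "t \<in> S" for t
  proof -
    have t': "\<bar>t\<bar> < 1 / growth"
      using t by (simp add: S_def)
    have q_pos: "q t > 0"
      using generating_polynomial_pos[OF t'] by (simp add: q_def)
    have "(q has_real_derivative 2 * t - 2 * x) (at t)"
      unfolding q_def by (auto intro!: derivative_eq_intros)
    from DERIV_mult[OF has_field_derivative_eval_fps[OF norm_less_fps_conv_radius(1)[OF t']]
                      DERIV_fun_powr[OF this q_pos, of \<mu>]]
    have "(h has_field_derivative
            eval_fps (fps_deriv F) t * q t powr \<mu>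
            + eval_fps F t * (\<mu> * q t powr (\<mu> - 1) * (2 * t - 2 * x))) (at t)"
      by (simp add: h_def F_def ac_simps)
    also have "eval_fps (fps_deriv F) t * q t powr \<mu>
            + eval_fps F t * (\<mu> * q t powr (\<mu> - 1) * (2 * t - 2 * x))
          = q t powr (\<mu> - 1) * (q t * eval_fps (fps_deriv F) t + \<mu> * (2 * t - 2 * x) * eval_fps F t)"
    proof -
      have "q t powr \<mu> = q t powr (\<mu> - 1) * q t"
        using q_pos by (simp add: powr_diff)
      thus ?thesis
        by (simp add: algebra_simps)
    qed
    also have "\<dots> = 0"
      using eval_fps_ode[OF t'] by (simp add: q_def F_def)
    finally show ?thesis
      by (rule has_field_derivative_at_within)
  qed
  then obtain k where "\<forall>t\<in>S. h t = k"
    using has_field_derivative_zero_constant[of S h] by (auto simp: S_def)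
  moreover have "0 \<in> S" "r \<in> S"
    using r growth_ge_1 by (auto simp: S_def)
  ultimately have "h r = h 0"
    by simp
  also have "h 0 = 1"
    by (simp add: h_def q_def eval_fps_at_0 F_def c_0)
  finally show ?thesis
    using generating_polynomial_pos[OF r] by (simp add: h_def q_def F_def powr_minus field_simps)
qed

theorem gegenbauer_eq: "gegenbauer \<mu> n x = c n"
proof -
  have "fps_conv_radius (Abs_fps c) > 0"
    using fps_conv_radius_ge growth_ge_1 by (auto intro: less_le_trans[rotated])
  moreover have "eventually (\<lambda>r. (1 - 2 * x * r + r ^ 2) powr (- \<mu>) = eval_fps (Abs_fps c) r) (nhds 0)"
    using eventually_nhds_in_open[of "ball 0 (1 / growth)" 0] growth_ge_1
    by (auto elim!: eventually_mono simp: eval_fps_eq_generating_function)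
  ultimately show ?thesis
    unfolding gegenbauer_def
    by (simp add: higher_deriv_cong_ev[OF _ refl] fps_nth_conv_higher_deriv_real[symmetric])
qed

end

section \<open>Hypergeometric expansion\<close>

text \<open>rGamma (n - k + 1) is 1/(n - k)! for k \<le> n and vanishes for k > n, so the coefficient
  identities below need no case distinction on k \<le> n.\<close>
definition gegenbauer_coeff :: "real \<Rightarrow> nat \<Rightarrow> nat \<Rightarrow> real" where
  "gegenbauer_coeff \<mu> n k =
     (-1) ^ k * pochhammer (2 * \<mu>) (n + k) * rGamma (real n - real k + 1)
       / (fact k * pochhammer (\<mu> + 1/2) k)"

lemma gegenbauer_coeff_eq_0: "n < k \<Longrightarrow> gegenbauer_coeff \<mu> n k = 0"
proof -
  assume "n < k"
  have "real n - real k + 1 = of_int (int n - int k + 1)"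
    by simp
  also have "rGamma \<dots> = 0"
    using \<open>n < k\<close> by (subst rGamma_of_int) simp
  finally show ?thesis
    by (simp add: gegenbauer_coeff_def)
qed

lemma gegenbauer_coeff_sum_extend:
  "m \<le> N \<Longrightarrow> (\<Sum>k\<le>m. gegenbauer_coeff \<mu> m k * y ^ k) = (\<Sum>k\<le>N. gegenbauer_coeff \<mu> m k * y ^ k)"
  by (intro sum.mono_neutral_left) (auto simp: gegenbauer_coeff_eq_0)

text \<open>The coefficient of y^k in y * (\<Sum>j\<le>n+1. gegenbauer_coeff \<mu> (n + 1) j * y^j).\<close>
lemma gegenbauer_coeff_shift:
  assumes "\<mu> > -1/2"
  shows "(case k of 0 \<Rightarrow> 0 | Suc j \<Rightarrow> gegenbauer_coeff \<mu> (n + 1) j)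
           = - real k * (\<mu> - 1/2 + k) * (-1) ^ k * pochhammer (2 * \<mu>) (n + k) * rGamma (real n - real k + 3)
               / (fact k * pochhammer (\<mu> + 1/2) k)"
proof (cases k)
  case (Suc j)
  define a where "a = \<mu> - 1/2 + k"
  have nz: "pochhammer (\<mu> + 1/2) j \<noteq> 0" "a \<noteq> 0" "real k \<noteq> 0"
    using assms Suc pochhammer_pos[of "\<mu> + 1/2" j] by (simp_all add: a_def)
  have fact_k: "fact k = real k * fact j"
    and pochhammer_k: "pochhammer (\<mu> + 1/2) k = pochhammer (\<mu> + 1/2) j * a"
    and coeff_j: "gegenbauer_coeff \<mu> (n + 1) j
           = - ((-1) ^ k * pochhammer (2 * \<mu>) (n + k) * rGamma (real n - real k + 3))
               / (fact j * pochhammer (\<mu> + 1/2) j)"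
    by (simp_all add: Suc pochhammer_Suc a_def gegenbauer_coeff_def)
  have "gegenbauer_coeff \<mu> (n + 1) j
      = - real k * a * (-1) ^ k * pochhammer (2 * \<mu>) (n + k) * rGamma (real n - real k + 3)
          / (fact k * pochhammer (\<mu> + 1/2) k)"
    unfolding coeff_j fact_k pochhammer_k using nz by (simp add: field_simps)
  thus ?thesis
    by (simp add: Suc a_def)
qed simp

lemma gegenbauer_coeff_rec:
  assumes "\<mu> > -1/2"
  shows "(real n + 2) * gegenbauer_coeff \<mu> (n + 2) k
     = 2 * (real n + 1 + \<mu>) * (gegenbauer_coeff \<mu> (n + 1) k
          - 2 * (case k of 0 \<Rightarrow> 0 | Suc j \<Rightarrow> gegenbauer_coeff \<mu> (n + 1) j))
       - (real n + 2 * \<mu>) * gegenbauer_coeff \<mu> n k"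
proof -
  define r where "r = rGamma (real n - real k + 3)"
  define E where "E = (-1) ^ k * pochhammer (2 * \<mu>) (n + k) * r / (fact k * pochhammer (\<mu> + 1/2) k)"
  have r2: "rGamma (real (n + 2) - real k + 1) = r"
    by (simp add: r_def add.commute add.left_commute diff_add_eq)
  have shift2: "rGamma (real n - real k + 2) = (real n - real k + 2) * r"
    using rGamma_plus1[of "real n - real k + 2"] by (simp add: r_def add.assoc)
  have r1: "rGamma (real (n + 1) - real k + 1) = (real n + 2 - real k) * r"
    using shift2 by (simp add: add.commute add.left_commute diff_add_eq)
  have "rGamma (real n - real k + 1) = (real n - real k + 1) * rGamma (real n - real k + 2)"
    using rGamma_plus1[of "real n - real k + 1"] by (simp add: add.assoc)
  hence r0: "rGamma (real n - real k + 1) = (real n + 1 - real k) * (real n + 2 - real k) * r"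
    unfolding shift2 by (simp add: algebra_simps)
  have a2: "gegenbauer_coeff \<mu> (n + 2) k = E * ((2 * \<mu> + n + k) * (2 * \<mu> + n + k + 1))"
  proof -
    have "pochhammer (2 * \<mu>) (n + 2 + k)
        = pochhammer (2 * \<mu>) (n + k) * ((2 * \<mu> + n + k) * (2 * \<mu> + n + k + 1))"
      by (simp add: pochhammer_Suc numeral_2_eq_2 algebra_simps)
    thus ?thesis
      unfolding gegenbauer_coeff_def E_def r2 by (simp add: ac_simps)
  qed
  have a1: "gegenbauer_coeff \<mu> (n + 1) k = E * ((2 * \<mu> + n + k) * (real n + 2 - k))"
  proof -
    have "pochhammer (2 * \<mu>) (n + 1 + k) = pochhammer (2 * \<mu>) (n + k) * (2 * \<mu> + n + k)"
      by (simp add: pochhammer_Suc algebra_simps)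
    thus ?thesis
      unfolding gegenbauer_coeff_def E_def r1 by (simp add: ac_simps)
  qed
  have a0: "gegenbauer_coeff \<mu> n k = E * ((real n + 2 - k) * (real n + 1 - k))"
    unfolding gegenbauer_coeff_def E_def r0 by (simp add: ac_simps)
  have shift: "(case k of 0 \<Rightarrow> 0 | Suc j \<Rightarrow> gegenbauer_coeff \<mu> (n + 1) j) = - E * (k * (\<mu> - 1/2 + k))"
    by (simp add: gegenbauer_coeff_shift[OF assms] E_def r_def)
  show ?thesis
    unfolding a2 a1 a0 shift by (simp add: algebra_simps)
qed

lemma gegenbauer_coeff_sum_rec:
  fixes \<mu> x :: real
  assumes "\<mu> > -1/2"
  defines "P \<equiv> \<lambda>m. \<Sum>k\<le>m. gegenbauer_coeff \<mu> m k * ((1 - x) / 2) ^ k"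
  shows "(real n + 2) * P (n + 2) = 2 * x * (real n + 1 + \<mu>) * P (n + 1) - (real n + 2 * \<mu>) * P n"
proof -
  define y where "y = (1 - x) / 2"
  have P_y: "P m = (\<Sum>k\<le>m. gegenbauer_coeff \<mu> m k * y ^ k)" for m
    by (simp add: P_def y_def)
  define shift where "shift k = (case k of 0 \<Rightarrow> 0 | Suc j \<Rightarrow> gegenbauer_coeff \<mu> (n + 1) j)" for k
  have "y * P (n + 1) = (\<Sum>k\<le>n + 1. gegenbauer_coeff \<mu> (n + 1) k * y ^ Suc k)"
    by (simp add: P_y sum_distrib_left ac_simps del: sum.atMost_Suc)
  also have "\<dots> = (\<Sum>k\<le>n + 2. shift k * y ^ k)"
    by (simp add: sum.atMost_Suc_shift shift_def del: sum.atMost_Suc)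
  finally have shifted: "y * P (n + 1) = (\<Sum>k\<le>n + 2. shift k * y ^ k)" .
  have "(real n + 2) * P (n + 2) = (\<Sum>k\<le>n + 2. ((real n + 2) * gegenbauer_coeff \<mu> (n + 2) k) * y ^ k)"
    by (simp add: P_y sum_distrib_left ac_simps del: sum.atMost_Suc)
  also have "\<dots> = (\<Sum>k\<le>n + 2. (2 * (real n + 1 + \<mu>) * (gegenbauer_coeff \<mu> (n + 1) k - 2 * shift k)
                                   - (real n + 2 * \<mu>) * gegenbauer_coeff \<mu> n k) * y ^ k)"
    unfolding shift_def gegenbauer_coeff_rec[OF assms(1)] ..
  also have "\<dots> = 2 * (real n + 1 + \<mu>) * ((\<Sum>k\<le>n + 2. gegenbauer_coeff \<mu> (n + 1) k * y ^ k)
                        - 2 * (\<Sum>k\<le>n + 2. shift k * y ^ k))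
                    - (real n + 2 * \<mu>) * (\<Sum>k\<le>n + 2. gegenbauer_coeff \<mu> n k * y ^ k)"
    by (simp add: sum_subtractf sum_distrib_left left_diff_distrib right_diff_distrib mult.assoc
             del: sum.atMost_Suc)
  also have "\<dots> = 2 * (real n + 1 + \<mu>) * (P (n + 1) - 2 * (y * P (n + 1))) - (real n + 2 * \<mu>) * P n"
  proof -
    have "(\<Sum>k\<le>n + 2. gegenbauer_coeff \<mu> (n + 1) k * y ^ k) = P (n + 1)"
      and "(\<Sum>k\<le>n + 2. gegenbauer_coeff \<mu> n k * y ^ k) = P n"
      unfolding P_y by (rule gegenbauer_coeff_sum_extend[symmetric], simp)+
    thus ?thesis
      by (simp only: shifted)
  qed
  finally show ?thesis
    by (simp add: y_def field_simps)
qed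

lemma gegenbauer_sequence_coeff_sum:
  assumes "\<mu> > -1/2"
  shows "gegenbauer_sequence \<mu> x (\<lambda>m. \<Sum>k\<le>m. gegenbauer_coeff \<mu> m k * ((1 - x) / 2) ^ k)"
proof
  show "(\<Sum>k\<le>0. gegenbauer_coeff \<mu> 0 k * ((1 - x) / 2) ^ k) = 1"
    by (simp add: gegenbauer_coeff_def)
  have "rGamma 2 = (1 :: real)"
    using rGamma_plus1[of 1] by simp
  thus "(\<Sum>k\<le>1. gegenbauer_coeff \<mu> 1 k * ((1 - x) / 2) ^ k) = 2 * \<mu> * x"
    using assms by (simp add: gegenbauer_coeff_def pochhammer_Suc numeral_2_eq_2 field_simps)
qed (rule gegenbauer_coeff_sum_rec[OF assms])

theorem gegenbauer_eq_sum:
  "\<mu> > -1/2 \<Longrightarrow> gegenbauer \<mu> n x = (\<Sum>k\<le>n. gegenbauer_coeff \<mu> n k * ((1 - x) / 2) ^ k)"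
  using gegenbauer_sequence.gegenbauer_eq[OF gegenbauer_sequence_coeff_sum] by simp

lemma gegenbauer_sequence_gegenbauer: "\<mu> > -1/2 \<Longrightarrow> gegenbauer_sequence \<mu> x (\<lambda>n. gegenbauer \<mu> n x)"
  using gegenbauer_sequence_coeff_sum by (simp add: gegenbauer_eq_sum)

lemma gegenbauer_uminus:
  assumes "\<mu> > -1/2"
  shows "gegenbauer \<mu> n (- x) = (-1) ^ n * gegenbauer \<mu> n x"
proof -
  interpret gegenbauer_sequence \<mu> x "\<lambda>n. gegenbauer \<mu> n x"
    using gegenbauer_sequence_gegenbauer[OF assms] .
  have "gegenbauer_sequence \<mu> (- x) (\<lambda>n. (-1) ^ n * gegenbauer \<mu> n x)"
  proof
    fix n
    show "(real n + 2) * ((-1) ^ (n + 2) * gegenbauer \<mu> (n + 2) x)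
        = 2 * - x * (real n + 1 + \<mu>) * ((-1) ^ (n + 1) * gegenbauer \<mu> (n + 1) x)
          - (real n + 2 * \<mu>) * ((-1) ^ n * gegenbauer \<mu> n x)"
      using arg_cong[OF c_rec[of n], of "\<lambda>t. (-1) ^ n * t"] by (simp add: algebra_simps)
  qed (use c_0 c_1 in simp_all)
  thus ?thesis
    by (simp add: gegenbauer_sequence.gegenbauer_eq)
qed

section \<open>The operators on polynomials in 1 - x and 1 + x\<close>

lemma powr_mult_power: "x \<ge> 0 \<Longrightarrow> x powr a * x ^ k = x powr (a + real k)"
  for x a :: real
  by (cases "x = 0") (auto simp: powr_add powr_realpow)

lemma has_integral_Beta_right:
  fixes a b y :: real
  assumes a: "a > 0" and b: "b > 0" and y: "y < 1"
  shows "((\<lambda>\<tau>. (\<tau> - y) powr (b - 1) * (1 - \<tau>) powr (a - 1))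
           has_integral (1 - y) powr (a + b - 1) * Beta b a) {y..1}"
proof -
  define m where "m = 1 / (1 - y)"
  define c where "c = - y / (1 - y)"
  have m: "m > 0" and l: "1 - y > 0"
    using y by (simp_all add: m_def)
  have bounds: "(0 - c) /\<^sub>R m = y" "(1 - c) /\<^sub>R m = 1"
    using l by (simp_all add: m_def c_def field_simps)
  have "((\<lambda>t. (m * t + c) powr (b - 1) * (1 - (m * t + c)) powr (a - 1))
          has_integral Beta b a / m) {y..1}"
    using has_integral_affinity'[OF has_integral_Beta_real[OF b a, folded cbox_interval] m, of c]
    unfolding bounds by (simp add: divide_inverse_commute)
  hence scaled: "((\<lambda>t. (1 - y) powr (a + b - 2) * ((m * t + c) powr (b - 1) * (1 - (m * t + c)) powr (a - 1)))
          has_integral (1 - y) powr (a + b - 2) * (Beta b a / m)) {y..1}"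
    by (rule has_integral_mult_right)
  have total: "(1 - y) powr (a + b - 2) * (Beta b a / m) = (1 - y) powr (a + b - 1) * Beta b a"
  proof -
    have "(1 - y) powr (a + b - 2) * (1 - y) = (1 - y) powr (a + b - 1)"
      using l powr_add[of "1 - y" "a + b - 2" 1] by simp
    thus ?thesis by (simp add: m_def ac_simps)
  qed
  have integrand: "(1 - y) powr (a + b - 2) * ((m * t + c) powr (b - 1) * (1 - (m * t + c)) powr (a - 1))
      = (t - y) powr (b - 1) * (1 - t) powr (a - 1)" if t: "t \<in> {y..1}" for t
  proof -
    have "m * t + c = (t - y) / (1 - y)"
      by (simp add: m_def c_def diff_divide_distrib)
    moreover from this have "1 - (m * t + c) = (1 - t) / (1 - y)"
      using l by (simp add: field_simps)
    moreover have "((t - y) / (1 - y)) powr (b - 1) = (t - y) powr (b - 1) / (1 - y) powr (b - 1)"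
      "((1 - t) / (1 - y)) powr (a - 1) = (1 - t) powr (a - 1) / (1 - y) powr (a - 1)"
      using t l by (simp_all add: powr_divide)
    moreover have "(1 - y) powr (a + b - 2) = (1 - y) powr (b - 1) * (1 - y) powr (a - 1)"
      by (simp add: powr_add[symmetric] add_ac)
    moreover have "(1 - y) powr (b - 1) > 0" "(1 - y) powr (a - 1) > 0"
      using l by simp_all
    ultimately show ?thesis
      by (simp only:) simp
  qed
  show ?thesis
    using iffD1[OF has_integral_cong[OF integrand] scaled] unfolding total .
qed

lemma Dminus_kernel_integral_power_sum:
  fixes lam y :: real and c :: "nat \<Rightarrow> real"
  assumes lam: "lam > 0" and y: "y < 1"
  shows "(1 - y) powr (- lam) *
           integral {y..1} (\<lambda>\<tau>. (\<tau> - y) powr (-1/2) * (1 - \<tau>) powr (lam - 1/2) * (\<Sum>k\<le>N. c k * (1 - \<tau>) ^ k))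
         = (\<Sum>k\<le>N. c k * Beta (1/2) (lam + k + 1/2) * (1 - y) ^ k)"
proof -
  have I: "((\<lambda>\<tau>. \<Sum>k\<le>N. c k * ((\<tau> - y) powr (1/2 - 1) * (1 - \<tau>) powr ((lam + k + 1/2) - 1)))
          has_integral (\<Sum>k\<le>N. c k * ((1 - y) powr ((lam + k + 1/2) + 1/2 - 1) * Beta (1/2) (lam + k + 1/2))))
        {y..1}"
    using lam y by (intro has_integral_sum has_integral_mult_right has_integral_Beta_right) auto
  have integrand: "(\<tau> - y) powr (-1/2) * (1 - \<tau>) powr (lam - 1/2) * (\<Sum>k\<le>N. c k * (1 - \<tau>) ^ k)
      = (\<Sum>k\<le>N. c k * ((\<tau> - y) powr (1/2 - 1) * (1 - \<tau>) powr ((lam + k + 1/2) - 1)))"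
    if "\<tau> \<in> {y..1}" for \<tau>
  proof -
    have "(1 - \<tau>) powr (lam + k + 1/2 - 1) = (1 - \<tau>) powr (lam - 1/2) * (1 - \<tau>) ^ k" for k
      using that powr_mult_power[of "1 - \<tau>" "lam - 1/2" k] by (simp add: algebra_simps)
    thus ?thesis
      unfolding sum_distrib_left by (intro sum.cong refl) (simp add: mult_ac)
  qed
  have integral_eq: "integral {y..1}
      (\<lambda>\<tau>. (\<tau> - y) powr (-1/2) * (1 - \<tau>) powr (lam - 1/2) * (\<Sum>k\<le>N. c k * (1 - \<tau>) ^ k))
      = (\<Sum>k\<le>N. c k * ((1 - y) powr (lam + k) * Beta (1/2) (lam + k + 1/2)))"
    using integral_unique[OF iffD2[OF has_integral_cong[OF integrand] I]] by (simp add: add_ac)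
  have power: "(1 - y) powr (- lam) * (1 - y) powr (lam + k) = (1 - y) ^ k" for k
    using y by (simp add: powr_add[symmetric] powr_realpow)
  show ?thesis
    unfolding integral_eq by (simp add: sum_distrib_left flip: power) (simp add: mult_ac)
qed

lemma Dplus_kernel_integral_power_sum:
  fixes lam y :: real and c :: "nat \<Rightarrow> real"
  assumes lam: "lam > 0" and y: "y > -1"
  shows "(1 + y) powr (- lam) *
           integral {-1..y} (\<lambda>\<tau>. (y - \<tau>) powr (-1/2) * (1 + \<tau>) powr (lam - 1/2) * (\<Sum>k\<le>N. c k * (1 + \<tau>) ^ k))
         = (\<Sum>k\<le>N. c k * Beta (1/2) (lam + k + 1/2) * (1 + y) ^ k)"
proof -
  let ?f = "\<lambda>\<tau>. (y - \<tau>) powr (-1/2) * (1 + \<tau>) powr (lam - 1/2) * (\<Sum>k\<le>N. c k * (1 + \<tau>) ^ k)"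
  have "integral {-1..y} ?f = integral {- y..- (- 1)} (\<lambda>\<tau>. ?f (- \<tau>))"
    by (rule Henstock_Kurzweil_Integration.integral_reflect_real[symmetric])
  also have "\<dots> = integral {- y..1}
      (\<lambda>\<tau>. (\<tau> - (- y)) powr (-1/2) * (1 - \<tau>) powr (lam - 1/2) * (\<Sum>k\<le>N. c k * (1 - \<tau>) ^ k))"
    unfolding minus_minus by (intro integral_cong) (simp add: add.commute)
  finally show ?thesis
    using Dminus_kernel_integral_power_sum[OF lam, of "- y" c N] y by simp
qed

lemma vector_derivative_within_Icc_eqI:
  fixes a b x d :: real
  assumes "(p has_real_derivative p') (at x)" "x \<in> {a..b}" "a < b" "d > 0"
    and "\<And>y. y \<in> {a..b} \<Longrightarrow> dist y x < d \<Longrightarrow> p y = G y"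
  shows "vector_derivative G (at x within {a..b}) = p'"
proof (rule vector_derivative_within_closed_interval)
  have "(p has_vector_derivative p') (at x within {a..b})"
    using assms(1) by (simp add: has_real_derivative_iff_has_vector_derivative has_vector_derivative_at_within)
  thus "(G has_vector_derivative p') (at x within {a..b})"
    by (rule has_vector_derivative_transform_within) (use assms in auto)
qed (use assms in auto)

lemma Dminus_power_sum:
  fixes lam x :: real and c :: "nat \<Rightarrow> real"
  assumes lam: "lam > 0" and x: "x \<in> {-1..1}"
  shows "Dminus lam (\<lambda>\<tau>. \<Sum>k\<le>N. c k * (1 - \<tau>) ^ k) x =
           - (\<Sum>k\<le>N. real k * c k * Beta (1/2) (lam + k + 1/2) * (1 - x) ^ k)"
proof (cases "x = 1")
  case False
  define b where "b k = c k * Beta (1/2) (lam + k + 1/2)" for k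
  have "x < 1"
    using x False by simp
  have "((\<lambda>y. \<Sum>k\<le>N. b k * (1 - y) ^ k) has_real_derivative
          (\<Sum>k\<le>N. - (real k * (1 - x) ^ (k - 1) * b k))) (at x)"
    by (intro DERIV_sum) (auto intro!: derivative_eq_intros)
  hence "vector_derivative (\<lambda>y. (1 - y) powr (- lam) *
            integral {y..1} (\<lambda>\<tau>. (\<tau> - y) powr (-1/2) * (1 - \<tau>) powr (lam - 1/2) * (\<Sum>k\<le>N. c k * (1 - \<tau>) ^ k)))
          (at x within {-1..1})
        = (\<Sum>k\<le>N. - (real k * (1 - x) ^ (k - 1) * b k))"
  proof (rule vector_derivative_within_Icc_eqI[OF _ x])
    fix y :: real
    assume "y \<in> {-1..1}" "dist y x < 1 - x"
    hence "y < 1"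
      by (simp add: dist_real_def)
    thus "(\<Sum>k\<le>N. b k * (1 - y) ^ k) = (1 - y) powr (- lam) *
            integral {y..1} (\<lambda>\<tau>. (\<tau> - y) powr (-1/2) * (1 - \<tau>) powr (lam - 1/2) * (\<Sum>k\<le>N. c k * (1 - \<tau>) ^ k))"
      using Dminus_kernel_integral_power_sum[OF lam] by (simp add: b_def)
  qed (use \<open>x < 1\<close> in auto)
  hence "Dminus lam (\<lambda>\<tau>. \<Sum>k\<le>N. c k * (1 - \<tau>) ^ k) x
      = (1 - x) * (\<Sum>k\<le>N. - (real k * (1 - x) ^ (k - 1) * b k))"
    by (simp add: Dminus_def)
  also have "\<dots> = - (\<Sum>k\<le>N. real k * b k * (1 - x) ^ k)"
  proof -
    have summand: "(1 - x) * - (real k * (1 - x) ^ (k - 1) * b k) = - (real k * b k * (1 - x) ^ k)" for k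
      by (cases k) (simp_all add: mult_ac)
    show ?thesis
      unfolding sum_distrib_left summand by (simp add: sum_negf)
  qed
  finally show ?thesis
    by (simp add: b_def mult.assoc)
qed (simp add: Dminus_def)

lemma Dplus_power_sum:
  fixes lam x :: real and c :: "nat \<Rightarrow> real"
  assumes lam: "lam > 0" and x: "x \<in> {-1..1}"
  shows "Dplus lam (\<lambda>\<tau>. \<Sum>k\<le>N. c k * (1 + \<tau>) ^ k) x =
           (\<Sum>k\<le>N. real k * c k * Beta (1/2) (lam + k + 1/2) * (1 + x) ^ k)"
proof (cases "x = -1")
  case False
  define b where "b k = c k * Beta (1/2) (lam + k + 1/2)" for k
  have "x > -1"
    using x False by simp
  have "((\<lambda>y. \<Sum>k\<le>N. b k * (1 + y) ^ k) has_real_derivative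
          (\<Sum>k\<le>N. real k * (1 + x) ^ (k - 1) * b k)) (at x)"
    by (intro DERIV_sum) (auto intro!: derivative_eq_intros)
  hence "vector_derivative (\<lambda>y. (1 + y) powr (- lam) *
            integral {-1..y} (\<lambda>\<tau>. (y - \<tau>) powr (-1/2) * (1 + \<tau>) powr (lam - 1/2) * (\<Sum>k\<le>N. c k * (1 + \<tau>) ^ k)))
          (at x within {-1..1})
        = (\<Sum>k\<le>N. real k * (1 + x) ^ (k - 1) * b k)"
  proof (rule vector_derivative_within_Icc_eqI[OF _ x])
    fix y :: real
    assume "y \<in> {-1..1}" "dist y x < 1 + x"
    hence "y > -1"
      by (simp add: dist_real_def)
    thus "(\<Sum>k\<le>N. b k * (1 + y) ^ k) = (1 + y) powr (- lam) *
            integral {-1..y} (\<lambda>\<tau>. (y - \<tau>) powr (-1/2) * (1 + \<tau>) powr (lam - 1/2) * (\<Sum>k\<le>N. c k * (1 + \<tau>) ^ k))"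
      using Dplus_kernel_integral_power_sum[OF lam] by (simp add: b_def)
  qed (use \<open>x > -1\<close> in auto)
  hence "Dplus lam (\<lambda>\<tau>. \<Sum>k\<le>N. c k * (1 + \<tau>) ^ k) x
      = (1 + x) * (\<Sum>k\<le>N. real k * (1 + x) ^ (k - 1) * b k)"
    by (simp add: Dplus_def)
  also have "\<dots> = (\<Sum>k\<le>N. real k * b k * (1 + x) ^ k)"
  proof -
    have summand: "(1 + x) * (real k * (1 + x) ^ (k - 1) * b k) = real k * b k * (1 + x) ^ k" for k
      by (cases k) (simp_all add: mult_ac)
    show ?thesis
      unfolding sum_distrib_left summand ..
  qed
  finally show ?thesis
    by (simp add: b_def mult.assoc)
qed (simp add: Dplus_def)

section \<open>The operators on Gegenbauer polynomials\<close>

lemma Beta_half_eq_pochhammer: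
  fixes lam :: real
  assumes lam: "lam > 0"
  shows "Beta (1/2) (lam + k + 1/2)
           = sqrt pi * Gamma (lam + 1/2) / Gamma lam * pochhammer (lam + 1/2) k / pochhammer lam (k + 1)"
proof -
  have not_nonpos: "z \<notin> \<int>\<^sub>\<le>\<^sub>0" if "z > 0" for z :: real
    using that nonpos_Ints_nonpos by force
  have "Gamma (lam + 1/2) \<noteq> 0" "Gamma lam \<noteq> 0"
    using lam by (simp_all add: Gamma_eq_zero_iff not_nonpos)
  moreover have "pochhammer (lam + 1/2) k = Gamma (lam + 1/2 + k) / Gamma (lam + 1/2)"
    and "pochhammer lam (k + 1) = Gamma (lam + real (k + 1)) / Gamma lam"
    using lam by (simp_all add: pochhammer_Gamma not_nonpos)
  ultimately have "Gamma (lam + 1/2 + k) = pochhammer (lam + 1/2) k * Gamma (lam + 1/2)"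
    and "Gamma (lam + real (k + 1)) = pochhammer lam (k + 1) * Gamma lam"
    by simp_all
  thus ?thesis
    unfolding Beta_def Gamma_one_half_real[symmetric] by (simp add: add_ac mult_ac)
qed

lemma gegenbauer_coeff_Beta:
  fixes lam :: real
  assumes lam: "lam > 0"
  shows "real k * gegenbauer_coeff lam (m + 1) k * Beta (1/2) (lam + k + 1/2)
           = sqrt pi * Gamma (lam + 1/2) / Gamma lam / (real m + 1 + lam) *
             ((real m + 1) * gegenbauer_coeff (lam + 1/2) (m + 1) k
              - (real m + 1 + 2 * lam) * gegenbauer_coeff (lam + 1/2) m k)"
proof -
  define K where "K = sqrt pi * Gamma (lam + 1/2) / Gamma lam"
  define r where "r = rGamma (real m - real k + 2)"
  define F where "F = (-1) ^ k * pochhammer (2 * lam + 1) (m + k) * r / (fact k * pochhammer (lam + 1) k)"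
  have nz: "pochhammer (lam + 1/2) k \<noteq> 0" "pochhammer (lam + 1) k \<noteq> 0" "lam \<noteq> 0" "real m + 1 + lam \<noteq> 0"
    using lam pochhammer_pos[of "lam + 1/2" k] pochhammer_pos[of "lam + 1" k] by simp_all
  have Beta_term: "gegenbauer_coeff lam (m + 1) k * Beta (1/2) (lam + k + 1/2) = 2 * K * F"
  proof -
    have "pochhammer (2 * lam) (m + 1 + k) = 2 * lam * pochhammer (2 * lam + 1) (m + k)"
      by (simp add: pochhammer_rec)
    moreover have "pochhammer lam (k + 1) = lam * pochhammer (lam + 1) k"
      by (simp add: pochhammer_rec)
    moreover have "rGamma (real (m + 1) - real k + 1) = r"
      by (simp add: r_def add_ac)
    ultimately show ?thesis
      using nz unfolding gegenbauer_coeff_def Beta_half_eq_pochhammer[OF lam] K_def F_def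
      by (simp add: field_simps)
  qed
  have coeff_Suc: "gegenbauer_coeff (lam + 1/2) (m + 1) k = F * (2 * lam + 1 + m + k)"
  proof -
    have "pochhammer (2 * lam + 1) (m + 1 + k) = pochhammer (2 * lam + 1) (m + k) * (2 * lam + 1 + m + k)"
      by (simp add: pochhammer_Suc)
    moreover have "rGamma (real (m + 1) - real k + 1) = r"
      by (simp add: r_def add_ac)
    ultimately show ?thesis
      unfolding gegenbauer_coeff_def F_def by (simp add: algebra_simps)
  qed
  have coeff: "gegenbauer_coeff (lam + 1/2) m k = F * (real m + 1 - k)"
  proof -
    have rGamma_eq: "rGamma (real m - real k + 1) = (real m - real k + 1) * r"
      using rGamma_plus1[of "real m - real k + 1"] by (simp add: r_def add.assoc)
    show ?thesis
      unfolding gegenbauer_coeff_def F_def rGamma_eq by (simp add: algebra_simps)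
  qed
  show ?thesis
    unfolding mult.assoc[of "real k"] Beta_term coeff_Suc coeff K_def[symmetric]
    using nz by (simp add: field_simps)
qed

lemma Dminus_gegenbauer:
  fixes lam x :: real
  assumes lam: "lam > 0" and x: "x \<in> {-1..1}"
  shows "Dminus lam (gegenbauer lam n) x =
           - (\<Sum>k\<le>n. real k * gegenbauer_coeff lam n k * Beta (1/2) (lam + k + 1/2) * ((1 - x) / 2) ^ k)"
proof -
  have expansion: "gegenbauer lam n = (\<lambda>\<tau>. \<Sum>k\<le>n. gegenbauer_coeff lam n k / 2 ^ k * (1 - \<tau>) ^ k)"
    using lam by (simp add: fun_eq_iff gegenbauer_eq_sum power_divide)
  have "Dminus lam (gegenbauer lam n) x
      = - (\<Sum>k\<le>n. real k * (gegenbauer_coeff lam n k / 2 ^ k) * Beta (1/2) (lam + k + 1/2) * (1 - x) ^ k)"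
    unfolding expansion by (rule Dminus_power_sum[OF lam x])
  thus ?thesis
    by (simp add: power_divide)
qed

lemma Dplus_gegenbauer_eq_Dminus_uminus:
  fixes lam x :: real
  assumes lam: "lam > 0" and x: "x \<in> {-1..1}"
  shows "Dplus lam (gegenbauer lam n) x = (-1) ^ Suc n * Dminus lam (gegenbauer lam n) (- x)"
proof -
  have expansion: "gegenbauer lam n = (\<lambda>\<tau>. \<Sum>k\<le>n. (-1) ^ n * gegenbauer_coeff lam n k / 2 ^ k * (1 + \<tau>) ^ k)"
  proof
    fix \<tau> :: real
    have "gegenbauer lam n \<tau> = (-1) ^ n * gegenbauer lam n (- \<tau>)"
      using lam by (simp add: gegenbauer_uminus)
    thus "gegenbauer lam n \<tau> = (\<Sum>k\<le>n. (-1) ^ n * gegenbauer_coeff lam n k / 2 ^ k * (1 + \<tau>) ^ k)"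
      using lam by (simp add: gegenbauer_eq_sum sum_distrib_left power_divide mult_ac)
  qed
  have "Dplus lam (gegenbauer lam n) x
      = (\<Sum>k\<le>n. real k * ((-1) ^ n * gegenbauer_coeff lam n k / 2 ^ k) * Beta (1/2) (lam + k + 1/2) * (1 + x) ^ k)"
    unfolding expansion by (rule Dplus_power_sum[OF lam x])
  also have "\<dots> = (-1) ^ Suc n * Dminus lam (gegenbauer lam n) (- x)"
    using Dminus_gegenbauer[OF lam, of "- x"] x by (simp add: sum_distrib_left sum_negf power_divide mult_ac)
  finally show ?thesis .
qed

lemma Dminus_gegenbauer_Suc:
  fixes lam x :: real
  assumes lam: "lam > 0" and x: "x \<in> {-1..1}"
  shows "Dminus lam (gegenbauer lam (Suc m)) x =
           sqrt pi * Gamma (lam + 1/2) / Gamma lam / (real m + 1 + lam) *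
           ((real m + 1 + 2 * lam) * gegenbauer (lam + 1/2) m x - (real m + 1) * gegenbauer (lam + 1/2) (Suc m) x)"
proof -
  define K where "K = sqrt pi * Gamma (lam + 1/2) / Gamma lam / (real m + 1 + lam)"
  define y where "y = (1 - x) / 2"
  define S where "S j = (\<Sum>k\<le>m + 1. gegenbauer_coeff (lam + 1/2) j k * y ^ k)" for j
  have "Dminus lam (gegenbauer lam (Suc m)) x
      = - (\<Sum>k\<le>m + 1. real k * gegenbauer_coeff lam (m + 1) k * Beta (1/2) (lam + k + 1/2) * y ^ k)"
    using Dminus_gegenbauer[OF lam x] by (simp add: y_def)
  also have "\<dots> = - (\<Sum>k\<le>m + 1. K * ((real m + 1) * gegenbauer_coeff (lam + 1/2) (m + 1) k
                        - (real m + 1 + 2 * lam) * gegenbauer_coeff (lam + 1/2) m k) * y ^ k)"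
    by (simp only: gegenbauer_coeff_Beta[OF lam] K_def)
  also have "\<dots> = K * ((real m + 1 + 2 * lam) * S m - (real m + 1) * S (m + 1))"
    by (simp add: S_def sum_distrib_left sum_subtractf algebra_simps del: sum.atMost_Suc)
  moreover have "S m = gegenbauer (lam + 1/2) m x" "S (m + 1) = gegenbauer (lam + 1/2) (Suc m) x"
    using lam gegenbauer_coeff_sum_extend[of m "m + 1"]
    by (simp_all add: S_def y_def gegenbauer_eq_sum del: sum.atMost_Suc)
  ultimately show ?thesis
    by (simp add: K_def)
qed

lemma Dplus_gegenbauer_Suc:
  fixes lam x :: real
  assumes lam: "lam > 0" and x: "x \<in> {-1..1}"
  shows "Dplus lam (gegenbauer lam (Suc m)) x =
           sqrt pi * Gamma (lam + 1/2) / Gamma lam / (real m + 1 + lam) *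
           ((real m + 1 + 2 * lam) * gegenbauer (lam + 1/2) m x + (real m + 1) * gegenbauer (lam + 1/2) (Suc m) x)"
  using lam x Dminus_gegenbauer_Suc[OF lam, of "- x" m]
  by (simp add: Dplus_gegenbauer_eq_Dminus_uminus gegenbauer_uminus algebra_simps)

theorem theorem3p5:
  fixes lam :: real and n :: nat and x :: real
  assumes "lam > 0" and "x \<in> {-1..1}"
  shows "calDplus lam (gegenbauer lam n) x =
           sqrt pi * Gamma (lam + 1/2) / Gamma lam * (2 * (real n + 2 * lam) / (real n + lam)) *
           (if n = 0 then 0 else gegenbauer (lam + 1/2) (n - 1) x) \<and>
         calDminus lam (gegenbauer lam n) x =
           sqrt pi * Gamma (lam + 1/2) / Gamma lam * (2 * real n / (real n + lam)) *
           gegenbauer (lam + 1/2) n x"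
proof (cases n)
  case 0
  have "Dminus lam (gegenbauer lam 0) y = 0" if "y \<in> {-1..1}" for y
    using Dminus_gegenbauer[OF assms(1) that] by simp
  thus ?thesis
    using 0 assms by (simp add: calDplus_def calDminus_def Dplus_gegenbauer_eq_Dminus_uminus)
next
  case (Suc m)
  define K where "K = sqrt pi * Gamma (lam + 1/2) / Gamma lam / (real n + lam)"
  have Dminus: "Dminus lam (gegenbauer lam n) x
      = K * ((real n + 2 * lam) * gegenbauer (lam + 1/2) (n - 1) x - real n * gegenbauer (lam + 1/2) n x)"
   and Dplus: "Dplus lam (gegenbauer lam n) x
      = K * ((real n + 2 * lam) * gegenbauer (lam + 1/2) (n - 1) x + real n * gegenbauer (lam + 1/2) n x)"
    using Dminus_gegenbauer_Suc[OF assms, of m] Dplus_gegenbauer_Suc[OF assms, of m]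
    by (simp_all add: Suc K_def add_ac)
  moreover have "sqrt pi * Gamma (lam + 1/2) / Gamma lam * (2 * (real n + 2 * lam) / (real n + lam))
      = 2 * K * (real n + 2 * lam)"
    and "sqrt pi * Gamma (lam + 1/2) / Gamma lam * (2 * real n / (real n + lam)) = 2 * K * real n"
    by (simp_all add: K_def)
  ultimately show ?thesis
    using Suc by (simp add: calDplus_def calDminus_def algebra_simps)
qed

end
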